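(* Let $\mathbb K$ be a field of characteristic $0$, let $g\in\mathbb K[X][Y]$ be an irreducible polynomial of total degree $d$ with $\partial g/\partial Y\neq0$, and let $\phi\in\overline{\mathbb K}\{\{X\}\}$ be a root of $g$. Let $h\in\mathbb K[X,Y]$ have degree at most $\delta$ in each variable, and suppose $h(X,\phi)\neq0$. Then $|\mathrm{val}(h(X,\phi))|\le2d\delta$.
   Context: $\overline{\mathbb K}\{\{X\}\}$ denotes the field of Puiseux series over the algebraic closure $\overline{\mathbb K}$: formal sums $\phi=\sum_{t\ge t_0}f_tX^{t/e}$ with $f_t\in\overline{\mathbb K}$, $f_{t_0}\neq0$, $t_0\in\mathbb Z$, $e\in\mathbb N_{>0}$; its valuation is $\mathrm{val}(\phi)=t_0/e$. *)

theory Defs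
  imports "HOL-Algebra.Algebraic_Closure_Type" "HOL-Computational_Algebra.Polynomial"
begin

definition puiseux :: "(rat \<Rightarrow> 'a::zero) \<Rightarrow> bool" where
  "puiseux f \<longleftrightarrow> (\<exists>e::nat. e > 0 \<and> (\<exists>t0::int. \<forall>q. f q \<noteq> 0 \<longrightarrow>
      (\<exists>t::int. t \<ge> t0 \<and> q = of_int t / of_nat e)))"

definition ps_add :: "(rat \<Rightarrow> 'a::comm_ring_1) \<Rightarrow> (rat \<Rightarrow> 'a) \<Rightarrow> rat \<Rightarrow> 'a" where
  "ps_add f g = (\<lambda>q. f q + g q)"

text \<open>Cauchy product; the index set is finite for Puiseux series.\<close>
definition ps_mult :: "(rat \<Rightarrow> 'a::comm_ring_1) \<Rightarrow> (rat \<Rightarrow> 'a) \<Rightarrow> rat \<Rightarrow> 'a" where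
  "ps_mult f g = (\<lambda>q. \<Sum>a\<in>{a. f a \<noteq> 0 \<and> g (q - a) \<noteq> 0}. f a * g (q - a))"

definition ps_of_poly :: "'k::field poly \<Rightarrow> rat \<Rightarrow> 'k alg_closure" where
  "ps_of_poly p = (\<lambda>q. if q \<in> \<int> \<and> q \<ge> 0 then to_ac (coeff p (nat \<lfloor>q\<rfloor>)) else 0)"

definition ps_eval :: "'k::field poly poly \<Rightarrow> (rat \<Rightarrow> 'k alg_closure) \<Rightarrow> rat \<Rightarrow> 'k alg_closure" where
  "ps_eval h phi = foldr (\<lambda>c acc. ps_add (ps_of_poly c) (ps_mult phi acc)) (coeffs h) (\<lambda>_. 0)"

definition ps_val :: "(rat \<Rightarrow> 'a::zero) \<Rightarrow> rat" where
  "ps_val f = (LEAST q. f q \<noteq> 0)"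

definition total_degree :: "'a::zero poly poly \<Rightarrow> nat" where
  "total_degree g = Max ({0} \<union> {i + degree (coeff g i) | i. coeff g i \<noteq> 0})"

end

theory Submission
  imports Defs
    "Subresultants.Subresultant_Gcd"
    "Berlekamp_Zassenhaus.Unique_Factorization"
    "HOL-Computational_Algebra.Formal_Laurent_Series"
begin

(* Clearing the common denominator e of the exponents of phi turns everything into Laurent
  series in T = X^(1/e), with K[X] embedded by X |-> T^e. Lower bound: the leading coefficient
  of g in Y has X-degree at most d, so a dominant-term argument gives val phi >= -d, and every
  monomial of h(X, phi) has valuation >= -d delta. Upper bound: g is irreducible and does not
  divide h, so R = Res_Y(g, h) is a nonzero polynomial in X of degree at most 2 d delta.
  Cramer's rule for the Sylvester matrix and the vector of powers of phi writes phi^j R as a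
  determinant in which only one column is not integral, and that column is a multiple of
  h(X, phi). Taking j = 0 or j = deg g + deg h - 1 according to the sign of val phi yields
  val h(X, phi) <= val R <= 2 d delta. *)

section \<open>Nonvanishing of resultants\<close>

(* A copy of an arbitrary field with the trivial gcd structure of a field, so that bivariate
  polynomials over it form a gcd ring and resultant_0_gcd applies. *)
typedef 'a gcd_field = "UNIV :: 'a::field set" morphisms of_gcd_field to_gcd_field by auto

setup_lifting type_definition_gcd_field

instantiation gcd_field :: (field) field
begin
lift_definition zero_gcd_field :: "'a gcd_field" is 0 .
lift_definition one_gcd_field :: "'a gcd_field" is 1 .
lift_definition plus_gcd_field :: "'a gcd_field \<Rightarrow> 'a gcd_field \<Rightarrow> 'a gcd_field" is "(+)" .
lift_definition minus_gcd_field :: "'a gcd_field \<Rightarrow> 'a gcd_field \<Rightarrow> 'a gcd_field" is "(-)" .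
lift_definition uminus_gcd_field :: "'a gcd_field \<Rightarrow> 'a gcd_field" is uminus .
lift_definition times_gcd_field :: "'a gcd_field \<Rightarrow> 'a gcd_field \<Rightarrow> 'a gcd_field" is "(*)" .
lift_definition inverse_gcd_field :: "'a gcd_field \<Rightarrow> 'a gcd_field" is inverse .
lift_definition divide_gcd_field :: "'a gcd_field \<Rightarrow> 'a gcd_field \<Rightarrow> 'a gcd_field" is "(/)" .
instance
  by standard (transfer; simp add: algebra_simps divide_inverse)+
end

instantiation gcd_field :: (field)
  "{unique_euclidean_ring, normalization_euclidean_semiring, normalization_semidom_multiplicative}"
begin
definition [simp]: "normalize_gcd_field = (normalize_field :: 'a gcd_field \<Rightarrow> _)"
definition [simp]: "unit_factor_gcd_field = (unit_factor_field :: 'a gcd_field \<Rightarrow> _)"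
definition [simp]: "modulo_gcd_field = (mod_field :: 'a gcd_field \<Rightarrow> _)"
definition [simp]: "euclidean_size_gcd_field = (euclidean_size_field :: 'a gcd_field \<Rightarrow> _)"
definition [simp]: "division_segment (x :: 'a gcd_field) = 1"
instance
  by standard (simp_all add: dvd_field_iff field_split_simps split: if_splits)
end

instantiation gcd_field :: (field) euclidean_ring_gcd
begin
definition "gcd_gcd_field = (Euclidean_Algorithm.gcd :: 'a gcd_field \<Rightarrow> _)"
definition "lcm_gcd_field = (Euclidean_Algorithm.lcm :: 'a gcd_field \<Rightarrow> _)"
definition "Gcd_gcd_field = (Euclidean_Algorithm.Gcd :: 'a gcd_field set \<Rightarrow> _)"
definition "Lcm_gcd_field = (Euclidean_Algorithm.Lcm :: 'a gcd_field set \<Rightarrow> _)"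
instance
  by standard (simp_all add: gcd_gcd_field_def lcm_gcd_field_def Gcd_gcd_field_def Lcm_gcd_field_def)
end

instance gcd_field :: (field) semiring_gcd_mult_normalize ..

lemma comm_ring_isom_to_gcd_field: "comm_ring_isom to_gcd_field"
proof unfold_locales
  show "surj to_gcd_field" by (metis surjI of_gcd_field_inverse)
qed (simp_all add: inj_def to_gcd_field_inject to_gcd_field_inverse zero_gcd_field_def
       one_gcd_field_def plus_gcd_field_def times_gcd_field_def)

lemma comm_ring_isom_map_poly:
  fixes hom :: "'a::comm_ring_1 \<Rightarrow> 'b::comm_ring_1"
  assumes "comm_ring_isom hom" shows "comm_ring_isom (map_poly hom)"
proof -
  interpret base: comm_ring_isom hom by (rule assms)
  interpret map_poly_inj_comm_ring_hom hom ..
  have "map_poly hom (map_poly (Hilbert_Choice.inv hom) p) = p" for p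
    by (subst map_poly_map_poly) (simp_all add: o_def)
  then have "surj (map_poly hom)" by (metis surjI)
  then show ?thesis by unfold_locales
qed

lemma resultant_nonzero_if_irreducible_not_dvd:
  fixes g h :: "'a::field poly poly"
  assumes irr: "irreducible g" and ndvd: "\<not> g dvd h"
  shows "resultant g h \<noteq> 0"
proof
  interpret K: comm_ring_isom to_gcd_field by (rule comm_ring_isom_to_gcd_field)
  interpret KX: comm_ring_isom "map_poly to_gcd_field" by (rule comm_ring_isom_map_poly) unfold_locales
  interpret KXY: comm_ring_isom "map_poly (map_poly to_gcd_field)"
    by (rule comm_ring_isom_map_poly) unfold_locales
  let ?W = "map_poly (map_poly to_gcd_field)"
  assume "resultant g h = 0"
  then have "resultant (?W g) (?W h) = 0" by (simp add: KX.resultant_hom)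
  then have "degree (gcd (?W g) (?W h)) \<noteq> 0" by (simp add: resultant_0_gcd)
  then have "\<not> gcd (?W g) (?W h) dvd 1" using divides_degree by fastforce
  moreover have "irreducible (?W g)" using irr by simp
  ultimately have "?W g dvd gcd (?W g) (?W h)" using irreducibleD' gcd_dvd1 by blast
  then have "?W g dvd ?W h" using dvd_trans gcd_dvd2 by blast
  with ndvd show False by simp
qed

section \<open>Laurent series vanishing below a given order\<close>

definition fls_vanishes_below :: "'a::zero fls \<Rightarrow> int \<Rightarrow> bool" where
  "fls_vanishes_below F a \<longleftrightarrow> (\<forall>n<a. fls_nth F n = 0)"

lemma fls_vanishes_below_mono: "fls_vanishes_below F a \<Longrightarrow> b \<le> a \<Longrightarrow> fls_vanishes_below F b"
  unfolding fls_vanishes_below_def by auto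

lemma fls_vanishes_below_0 [simp]: "fls_vanishes_below 0 a"
  unfolding fls_vanishes_below_def by simp

lemma fls_vanishes_below_1: "fls_vanishes_below 1 0"
  unfolding fls_vanishes_below_def by simp

lemma fls_vanishes_below_uminus:
  "fls_vanishes_below (F :: 'a::ab_group_add fls) a \<Longrightarrow> fls_vanishes_below (- F) a"
  unfolding fls_vanishes_below_def by simp

lemma fls_vanishes_below_subdegree: "fls_vanishes_below F (fls_subdegree F)"
  unfolding fls_vanishes_below_def by simp

lemma fls_subdegree_ge_if_vanishes_below:
  "F \<noteq> 0 \<Longrightarrow> fls_vanishes_below F a \<Longrightarrow> a \<le> fls_subdegree F"
  unfolding fls_vanishes_below_def by (rule fls_subdegree_geI) auto

lemma fls_vanishes_below_iff_subdegree:
  "F \<noteq> 0 \<Longrightarrow> fls_vanishes_below F a \<longleftrightarrow> a \<le> fls_subdegree F"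
  by (meson fls_subdegree_ge_if_vanishes_below fls_vanishes_below_mono fls_vanishes_below_subdegree)

lemma fls_vanishes_below_sum:
  "(\<And>x. x \<in> A \<Longrightarrow> fls_vanishes_below (f x) a) \<Longrightarrow> fls_vanishes_below (sum f A) a"
  unfolding fls_vanishes_below_def by (auto simp: fls_nth_sum)

lemma fls_vanishes_below_mult:
  fixes F G :: "'a::{comm_monoid_add,mult_zero} fls"
  assumes "fls_vanishes_below F a" "fls_vanishes_below G b"
  shows "fls_vanishes_below (F * G) (a + b)"
proof (cases "F = 0 \<or> G = 0")
  case False
  then have "a \<le> fls_subdegree F" "b \<le> fls_subdegree G"
    using assms by (auto simp: fls_vanishes_below_iff_subdegree)
  then show ?thesis unfolding fls_vanishes_below_def by (auto intro: fls_times_nth_eq0)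
qed auto

lemma fls_nth_times_vanishes_below:
  fixes F G :: "'a::comm_ring_1 fls"
  assumes "fls_vanishes_below F N1" "fls_vanishes_below G N2"
  shows "fls_nth (F * G) n = (\<Sum>i\<in>{N1..n - N2}. fls_nth F i * fls_nth G (n - i))"
proof (cases "F = 0 \<or> G = 0")
  case False
  then have "N1 \<le> fls_subdegree F" "N2 \<le> fls_subdegree G"
    using assms by (auto simp: fls_vanishes_below_iff_subdegree)
  then show ?thesis unfolding fls_times_nth(2)
    by (intro sum.mono_neutral_left) (auto simp: fls_vanishes_below_def)
qed auto

lemma fls_vanishes_below_prod:
  fixes f :: "'b \<Rightarrow> 'a::comm_semiring_1 fls"
  shows "finite A \<Longrightarrow> (\<And>x. x \<in> A \<Longrightarrow> fls_vanishes_below (f x) (c x)) \<Longrightarrow>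
    fls_vanishes_below (prod f A) (sum c A)"
  by (induction A rule: finite_induct) (simp_all add: fls_vanishes_below_1 fls_vanishes_below_mult)

lemma fls_vanishes_below_power:
  fixes F :: "'a::comm_semiring_1 fls"
  assumes "fls_vanishes_below F a"
  shows "fls_vanishes_below (F ^ n) (int n * a)"
  using fls_vanishes_below_prod[of "{..<n}" "\<lambda>_. F" "\<lambda>_. a"] assms by simp

lemma fls_vanishes_below_poly:
  fixes H :: "'a::comm_semiring_1 fls poly"
  assumes "\<And>i. fls_vanishes_below (coeff H i) 0" "fls_vanishes_below x (- D)" "0 \<le> D"
    "degree H \<le> \<delta>"
  shows "fls_vanishes_below (poly H x) (- (int \<delta> * D))"
  unfolding poly_altdef
proof (intro fls_vanishes_below_sum)
  fix j assume "j \<in> {..degree H}"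
  then have "- (int \<delta> * D) \<le> 0 + int j * - D"
    using assms(3,4) by (simp add: mult_right_mono)
  then show "fls_vanishes_below (coeff H j * x ^ j) (- (int \<delta> * D))"
    using fls_vanishes_below_mult[OF assms(1) fls_vanishes_below_power[OF assms(2)]]
      fls_vanishes_below_mono by blast
qed

lemma fls_vanishes_below_root:
  fixes G :: "'a::idom fls poly"
  assumes G: "G \<noteq> 0" and coeffs: "\<And>i. fls_vanishes_below (coeff G i) 0"
    and lead: "fls_subdegree (lead_coeff G) \<le> D" and root: "poly G x = 0"
  shows "fls_vanishes_below x (- D)"
proof (rule ccontr)
  \<comment> \<open>If the order of \<open>x\<close> were below \<open>-D\<close>, the leading term would dominate all others.\<close>
  assume "\<not> fls_vanishes_below x (- D)"
  then have x0: "x \<noteq> 0" and s: "fls_subdegree x < - D"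
    using fls_vanishes_below_iff_subdegree[of x "- D"] by (cases "x = 0"; auto)+
  define s where "s = fls_subdegree x"
  define m where "m = degree G"
  have "0 \<le> fls_subdegree (lead_coeff G)"
    using fls_subdegree_ge_if_vanishes_below[OF _ coeffs] G by simp
  with lead s have s_neg: "s < 0" and lead_lt: "fls_subdegree (lead_coeff G) < - s"
    unfolding s_def by linarith+
  define w where "w = fls_subdegree (lead_coeff G * x ^ m)"
  have w: "w = fls_subdegree (lead_coeff G) + int m * s"
    unfolding w_def s_def using G x0 by (simp add: fls_subdegree_pow)
  have "fls_vanishes_below (coeff G i * x ^ i) (w + 1)" if "i < m" for i
  proof -
    have "(int m - int i) * s \<le> 1 * s"
      using that s_neg by (intro mult_right_mono_neg) auto
    then have "w + 1 \<le> 0 + int i * s" using w lead_lt by (simp add: algebra_simps)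
    then show ?thesis
      using fls_vanishes_below_mult[OF coeffs fls_vanishes_below_power[OF fls_vanishes_below_subdegree]]
        fls_vanishes_below_mono unfolding s_def by blast
  qed
  then have "fls_vanishes_below (\<Sum>i<m. coeff G i * x ^ i) (w + 1)"
    by (intro fls_vanishes_below_sum) simp
  then have "fls_nth (\<Sum>i<m. coeff G i * x ^ i) w = 0"
    unfolding fls_vanishes_below_def by simp
  moreover have "poly G x = lead_coeff G * x ^ m + (\<Sum>i<m. coeff G i * x ^ i)"
    unfolding poly_altdef m_def by (simp add: lessThan_Suc_atMost[symmetric] add.commute)
  moreover have "fls_nth (lead_coeff G * x ^ m) w \<noteq> 0"
    unfolding w_def by (rule nth_fls_subdegree_nonzero) (use G x0 in simp)
  ultimately have "fls_nth (poly G x) w \<noteq> 0" by simp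
  with root show False by simp
qed

section \<open>Puiseux series with a common denominator as Laurent series\<close>

definition laurent_of_poly :: "nat \<Rightarrow> 'k::field poly \<Rightarrow> 'k alg_closure fls" where
  "laurent_of_poly e c = poly (map_poly (\<lambda>a. fls_const (to_ac a)) c) (fls_X ^ e)"

lemma comm_ring_hom_laurent_of_poly: "comm_ring_hom (laurent_of_poly e :: 'k::field poly \<Rightarrow> _)"
proof -
  interpret const: comm_ring_hom "\<lambda>a::'k. fls_const (to_ac a)"
    by unfold_locales (simp_all add: fls_plus_const)
  interpret map_poly_comm_ring_hom "\<lambda>a::'k. fls_const (to_ac a)" ..
  show ?thesis by unfold_locales (simp_all add: laurent_of_poly_def hom_add hom_mult)
qed

lemma fls_nth_laurent_of_poly:
  assumes e: "e > 0"
  shows "fls_nth (laurent_of_poly e c) n =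
    (if 0 \<le> n \<and> int e dvd n then to_ac (coeff c (nat n div e)) else 0)"
proof -
  have "laurent_of_poly e c = (\<Sum>k\<le>degree c. fls_const (to_ac (coeff c k)) * fls_X ^ (e * k))"
    unfolding laurent_of_poly_def poly_altdef by (simp add: coeff_map_poly degree_map_poly power_mult)
  then have "fls_nth (laurent_of_poly e c) n =
      (\<Sum>k\<le>degree c. if n = int (e * k) then to_ac (coeff c k) else 0)"
    by (simp add: fls_nth_sum fls_X_power_times_conv_shift)
  also have "\<dots> = (if 0 \<le> n \<and> int e dvd n then to_ac (coeff c (nat n div e)) else 0)"
  proof (cases "0 \<le> n \<and> int e dvd n")
    case True
    then obtain k' where "n = int e * k'" by (auto elim: dvdE)
    moreover from this True e have "k' \<ge> 0" by (simp add: zero_le_mult_iff)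
    ultimately obtain k where k: "n = int (e * k)" by (metis nat_0_le of_nat_mult)
    have "(\<Sum>j\<le>degree c. if n = int (e * j) then to_ac (coeff c j) else 0) =
        (\<Sum>j\<le>degree c. if j = k then to_ac (coeff c j) else 0)"
      using k e by (intro sum.cong) auto
    also have "\<dots> = to_ac (coeff c k)" by (simp add: coeff_eq_0)
    also have "k = nat n div e" using k e by (simp del: of_nat_mult)
    finally show ?thesis using True by simp
  next
    case False
    then have "n \<noteq> int (e * k)" for k by auto
    then show ?thesis using False by auto
  qed
  finally show ?thesis .
qed

lemma fls_vanishes_below_laurent_of_poly: "e > 0 \<Longrightarrow> fls_vanishes_below (laurent_of_poly e c) 0"
  unfolding fls_vanishes_below_def by (simp add: fls_nth_laurent_of_poly)

lemma fls_nth_laurent_of_poly_mult: "e > 0 \<Longrightarrow> fls_nth (laurent_of_poly e c) (int (e * k)) = to_ac (coeff c k)"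
  by (simp add: fls_nth_laurent_of_poly del: of_nat_mult)

lemma fls_subdegree_laurent_of_poly_le:
  "e > 0 \<Longrightarrow> c \<noteq> 0 \<Longrightarrow> fls_subdegree (laurent_of_poly e c) \<le> int (e * degree c)"
  by (rule fls_subdegree_leI) (simp add: fls_nth_laurent_of_poly_mult del: of_nat_mult)

lemma inj_comm_ring_hom_laurent_of_poly:
  assumes "e > 0" shows "inj_comm_ring_hom (laurent_of_poly e)"
proof -
  interpret comm_ring_hom "laurent_of_poly e" by (rule comm_ring_hom_laurent_of_poly)
  have "c = 0" if "laurent_of_poly e c = 0" for c
    using fls_nth_laurent_of_poly_mult[OF assms, of c] that by (intro poly_eqI) simp
  then show ?thesis by unfold_locales auto
qed

definition ps_lattice :: "nat \<Rightarrow> int \<Rightarrow> (rat \<Rightarrow> 'a::zero) \<Rightarrow> bool" where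
  "ps_lattice e N f \<longleftrightarrow> (\<forall>q. f q \<noteq> 0 \<longrightarrow> (\<exists>t::int. t \<ge> N \<and> q = of_int t / of_nat e))"

(* The coefficient of T^n is that of X^(n/e); Abs_fls yields a junk value unless
  ps_lattice e N f holds for some N. *)
definition fls_of_ps :: "nat \<Rightarrow> (rat \<Rightarrow> 'a::zero) \<Rightarrow> 'a fls" where
  "fls_of_ps e f = Abs_fls (\<lambda>n. f (of_int n / of_nat e))"

lemma of_int_divide_of_nat_eq_iff:
  "e > 0 \<Longrightarrow> (of_int t / of_nat e :: rat) = of_int u / of_nat e \<longleftrightarrow> t = u"
  by (simp add: divide_cancel_right)

lemma ps_lattice_mono: "ps_lattice e N f \<Longrightarrow> M \<le> N \<Longrightarrow> ps_lattice e M f"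
  unfolding ps_lattice_def by (meson order.trans)

lemma ps_lattice_zero: "ps_lattice e N (\<lambda>_. 0)"
  unfolding ps_lattice_def by simp

lemma fls_nth_fls_of_ps:
  assumes e: "e > 0" and f: "ps_lattice e N f"
  shows "fls_nth (fls_of_ps e f) n = f (of_int n / of_nat e)"
proof -
  have "f (of_int (- int m) / of_nat e) = 0" if "m > nat (- N)" for m
  proof (rule ccontr)
    assume "f (of_int (- int m) / of_nat e) \<noteq> 0"
    then obtain t where "t \<ge> N" "of_int (- int m) / of_nat e = (of_int t / of_nat e :: rat)"
      using f unfolding ps_lattice_def by blast
    with e that show False by (simp only: of_int_divide_of_nat_eq_iff)
  qed
  then have "\<forall>\<^sub>\<infinity> m::nat. f (of_int (- int m) / of_nat e) = 0"
    unfolding MOST_nat by blast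
  then show ?thesis unfolding fls_of_ps_def by (simp add: Abs_fls_inverse)
qed

lemma fls_vanishes_below_fls_of_ps:
  assumes e: "e > 0" and f: "ps_lattice e N f"
  shows "fls_vanishes_below (fls_of_ps e f) N"
  unfolding fls_vanishes_below_def fls_nth_fls_of_ps[OF assms]
proof (intro allI impI)
  fix n assume "n < N"
  with e f show "f (of_int n / of_nat e) = 0" unfolding ps_lattice_def by force
qed

lemma fls_of_ps_eq_0_iff:
  assumes e: "e > 0" and f: "ps_lattice e N f"
  shows "fls_of_ps e f = 0 \<longleftrightarrow> f = (\<lambda>_. 0)"
proof
  assume "fls_of_ps e f = 0"
  then have "f (of_int t / of_nat e) = 0" for t
    using fls_nth_fls_of_ps[OF assms, of t] by simp
  with f show "f = (\<lambda>_. 0)" unfolding ps_lattice_def by blast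
qed (use fls_nth_fls_of_ps[OF assms] in \<open>simp add: fls_eq_iff\<close>)

lemma fls_of_ps_zero: "e > 0 \<Longrightarrow> fls_of_ps e (\<lambda>_. 0 :: 'a::zero) = 0"
  using fls_of_ps_eq_0_iff[OF _ ps_lattice_zero] by blast

lemma ps_lattice_ps_add:
  "ps_lattice e N f \<Longrightarrow> ps_lattice e N g \<Longrightarrow> ps_lattice e N (ps_add f g)"
  unfolding ps_lattice_def ps_add_def by (metis add.right_neutral)

lemma fls_of_ps_ps_add:
  assumes e: "e > 0" and f: "ps_lattice e N f" and g: "ps_lattice e N g"
  shows "fls_of_ps e (ps_add f g) = fls_of_ps e f + fls_of_ps e g"
  using fls_nth_fls_of_ps[OF e ps_lattice_ps_add[OF f g]] fls_nth_fls_of_ps[OF e f]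
    fls_nth_fls_of_ps[OF e g]
  by (simp add: fls_eq_iff ps_add_def)

lemma ps_mult_support:
  assumes f: "ps_lattice e N1 f" and g: "ps_lattice e N2 g"
    and a: "f a \<noteq> 0" "g (q - a) \<noteq> 0"
  obtains t u where "t \<ge> N1" "u \<ge> N2" "a = of_int t / of_nat e" "q = of_int (t + u) / of_nat e"
proof -
  obtain t where t: "t \<ge> N1" "a = of_int t / of_nat e" using f a unfolding ps_lattice_def by blast
  obtain u where u: "u \<ge> N2" "q - a = of_int u / of_nat e" using g a unfolding ps_lattice_def by blast
  have "q = of_int (t + u) / of_nat e" using t u by (simp add: add_divide_distrib algebra_simps)
  with t u that show ?thesis by blast
qed

lemma ps_lattice_ps_mult:
  assumes f: "ps_lattice e N1 f" and g: "ps_lattice e N2 g"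
  shows "ps_lattice e (N1 + N2) (ps_mult f g)"
  unfolding ps_lattice_def
proof (intro allI impI)
  fix q assume "ps_mult f g q \<noteq> 0"
  then obtain a where "f a \<noteq> 0" "g (q - a) \<noteq> 0"
    unfolding ps_mult_def by (metis (mono_tags, lifting) empty_Collect_eq sum.empty)
  from ps_mult_support[OF f g this] obtain t u
    where "t \<ge> N1" "u \<ge> N2" "q = of_int (t + u) / of_nat e" by blast
  then show "\<exists>t\<ge>N1 + N2. q = of_int t / of_nat e" by (intro exI[of _ "t + u"]) simp
qed

lemma fls_of_ps_ps_mult:
  assumes e: "e > 0" and f: "ps_lattice e N1 f" and g: "ps_lattice e N2 g"
  shows "fls_of_ps e (ps_mult f g) = fls_of_ps e f * fls_of_ps e g"
proof (rule fls_eqI)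
  fix n
  define q where "q = (of_int n / of_nat e :: rat)"
  define r where "r t = (of_int t / of_nat e :: rat)" for t
  have inj_r: "inj_on r A" for A unfolding r_def inj_on_def using e by simp
  have q_minus: "q - r t = r (n - t)" for t unfolding q_def r_def by (simp add: diff_divide_distrib)
  have supp: "{a. f a \<noteq> 0 \<and> g (q - a) \<noteq> 0} \<subseteq> r ` {N1..n - N2}"
  proof
    fix a assume "a \<in> {a. f a \<noteq> 0 \<and> g (q - a) \<noteq> 0}"
    then obtain t u where "t \<ge> N1" "u \<ge> N2" "a = r t" "q = r (t + u)"
      using ps_mult_support[OF f g] unfolding r_def by blast
    moreover from this have "n = t + u" unfolding q_def r_def using e by simp
    ultimately show "a \<in> r ` {N1..n - N2}" by auto
  qed
  have "fls_nth (fls_of_ps e (ps_mult f g)) n = ps_mult f g q"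
    using fls_nth_fls_of_ps[OF e ps_lattice_ps_mult[OF f g]] q_def by simp
  also have "\<dots> = (\<Sum>a\<in>r ` {N1..n - N2}. f a * g (q - a))"
    unfolding ps_mult_def by (rule sum.mono_neutral_left) (use supp in auto)
  also have "\<dots> = (\<Sum>t\<in>{N1..n - N2}. f (r t) * g (r (n - t)))"
    by (simp add: sum.reindex[OF inj_r] q_minus)
  also have "\<dots> = (\<Sum>t\<in>{N1..n - N2}. fls_nth (fls_of_ps e f) t * fls_nth (fls_of_ps e g) (n - t))"
    using fls_nth_fls_of_ps[OF e f] fls_nth_fls_of_ps[OF e g] unfolding r_def by simp
  also have "\<dots> = fls_nth (fls_of_ps e f * fls_of_ps e g) n"
    using fls_vanishes_below_fls_of_ps[OF e f] fls_vanishes_below_fls_of_ps[OF e g]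
    by (rule fls_nth_times_vanishes_below[symmetric])
  finally show "fls_nth (fls_of_ps e (ps_mult f g)) n = fls_nth (fls_of_ps e f * fls_of_ps e g) n" .
qed

lemma ps_lattice_ps_of_poly:
  assumes "e > 0" shows "ps_lattice e 0 (ps_of_poly c)"
  unfolding ps_lattice_def ps_of_poly_def
proof (intro allI impI)
  fix q :: rat assume "(if q \<in> \<int> \<and> 0 \<le> q then to_ac (coeff c (nat \<lfloor>q\<rfloor>)) else 0) \<noteq> 0"
  then obtain k where "q = of_int k" "0 \<le> k" by (auto split: if_splits elim: Ints_cases)
  then show "\<exists>t\<ge>0. q = of_int t / of_nat e"
    using \<open>e > 0\<close> by (auto intro!: exI[of _ "int e * k"])
qed

lemma fls_of_ps_ps_of_poly:
  assumes e: "e > 0"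
  shows "fls_of_ps e (ps_of_poly c) = laurent_of_poly e c"
proof (rule fls_eqI)
  fix n
  have int_iff: "(of_int n / of_nat e :: rat) \<in> \<int> \<longleftrightarrow> int e dvd n"
  proof
    assume "of_int n / of_nat e \<in> (\<int> :: rat set)"
    then obtain k where "of_int n / of_nat e = (of_int k :: rat)" by (auto elim: Ints_cases)
    then have "(of_int n :: rat) = of_int (int e * k)" using e by (simp add: field_simps)
    then show "int e dvd n" by (simp only: of_int_eq_iff) simp
  qed (use e in \<open>auto elim!: dvdE\<close>)
  have "fls_nth (fls_of_ps e (ps_of_poly c)) n = ps_of_poly c (of_int n / of_nat e)"
    by (rule fls_nth_fls_of_ps[OF e ps_lattice_ps_of_poly[OF e]])
  also have "\<dots> = fls_nth (laurent_of_poly e c) n"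
  proof (cases "int e dvd n")
    case True
    then obtain k where k: "n = int e * k" by (auto elim: dvdE)
    then have "nat n div e = nat k" "0 \<le> n \<longleftrightarrow> 0 \<le> k"
      using e by (auto simp: nat_mult_distrib zero_le_mult_iff)
    then show ?thesis using True k e by (simp add: ps_of_poly_def fls_nth_laurent_of_poly)
  next
    case False
    then show ?thesis using int_iff e by (simp add: ps_of_poly_def fls_nth_laurent_of_poly)
  qed
  finally show "fls_nth (fls_of_ps e (ps_of_poly c)) n = fls_nth (laurent_of_poly e c) n" .
qed

lemma fls_of_ps_ps_eval:
  assumes e: "e > 0" and phi: "ps_lattice e N phi"
  shows "\<exists>M. ps_lattice e M (ps_eval h phi) \<and>
    fls_of_ps e (ps_eval h phi) = poly (map_poly (laurent_of_poly e) h) (fls_of_ps e phi)"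
proof -
  define step where "step c acc = ps_add (ps_of_poly c) (ps_mult phi acc)" for c acc
  have "\<exists>M. ps_lattice e M (foldr step cs (\<lambda>_. 0)) \<and>
      fls_of_ps e (foldr step cs (\<lambda>_. 0)) = poly (Poly (map (laurent_of_poly e) cs)) (fls_of_ps e phi)"
    for cs
  proof (induction cs)
    case Nil
    show ?case using fls_of_ps_zero[OF e] ps_lattice_zero by auto
  next
    case (Cons c cs)
    then obtain M where M: "ps_lattice e M (foldr step cs (\<lambda>_. 0))"
      and IH: "fls_of_ps e (foldr step cs (\<lambda>_. 0)) = poly (Poly (map (laurent_of_poly e) cs)) (fls_of_ps e phi)"
      by blast
    define B where "B = min 0 (N + M)"
    have c: "ps_lattice e B (ps_of_poly c)"
      by (rule ps_lattice_mono[OF ps_lattice_ps_of_poly[OF e]]) (simp add: B_def)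
    have rest: "ps_lattice e B (ps_mult phi (foldr step cs (\<lambda>_. 0)))"
      by (rule ps_lattice_mono[OF ps_lattice_ps_mult[OF phi M]]) (simp add: B_def)
    show ?case
      using ps_lattice_ps_add[OF c rest] fls_of_ps_ps_add[OF e c rest] IH
        fls_of_ps_ps_of_poly[OF e] fls_of_ps_ps_mult[OF e phi M]
      by (auto simp: step_def[of c])
  qed
  from this[of "coeffs h"] show ?thesis
    unfolding ps_eval_def step_def[symmetric] by (simp add: map_poly_def)
qed

lemma ps_val_eq_fls_subdegree:
  assumes e: "e > 0" and f: "ps_lattice e N f" and nz: "f \<noteq> (\<lambda>_. 0)"
  shows "ps_val f = of_int (fls_subdegree (fls_of_ps e f)) / of_nat e"
  unfolding ps_val_def
proof (rule Least_equality)
  have "fls_of_ps e f \<noteq> 0" using fls_of_ps_eq_0_iff[OF e f] nz by simp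
  then show "f (of_int (fls_subdegree (fls_of_ps e f)) / of_nat e) \<noteq> 0"
    using fls_nth_fls_of_ps[OF e f] nth_fls_subdegree_nonzero by metis
next
  fix q assume "f q \<noteq> 0"
  moreover obtain t where t: "q = of_int t / of_nat e" using f \<open>f q \<noteq> 0\<close> unfolding ps_lattice_def by blast
  ultimately have "fls_subdegree (fls_of_ps e f) \<le> t"
    using fls_nth_fls_of_ps[OF e f] by (intro fls_subdegree_leI) simp
  then show "of_int (fls_subdegree (fls_of_ps e f)) / of_nat e \<le> q"
    unfolding t by (intro divide_right_mono) auto
qed

section \<open>Degree and order bounds for resultants\<close>

lemma total_degree_ge:
  assumes "coeff g i \<noteq> 0" shows "i + degree (coeff g i) \<le> total_degree g"
proof -
  have "{i + degree (coeff g i) | i. coeff g i \<noteq> 0} \<subseteq> (\<lambda>i. i + degree (coeff g i)) ` {..degree g}"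
    using le_degree by blast
  then have "finite {i + degree (coeff g i) | i. coeff g i \<noteq> 0}"
    by (rule finite_subset) simp
  with assms show ?thesis unfolding total_degree_def by (intro Max_ge) auto
qed

lemma degree_coeff_le_total_degree: "degree (coeff g i) \<le> total_degree g"
  using total_degree_ge[of g i] by (cases "coeff g i = 0") auto

lemma degree_le_total_degree: "degree g \<le> total_degree g"
  using total_degree_ge[of g "degree g"] by (cases "g = 0") auto

lemma degree_det_le_rowwise:
  fixes A :: "'a::comm_ring_1 poly mat"
  assumes A: "A \<in> carrier_mat n n"
    and deg: "\<And>i j. i < n \<Longrightarrow> j < n \<Longrightarrow> degree (A $$ (i, j)) \<le> r i"
  shows "degree (det A) \<le> (\<Sum>i<n. r i)"
  unfolding det_def'[OF A]
proof (rule degree_sum_le)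
  fix p assume "p \<in> {p. p permutes {0..<n}}"
  then have p: "p i < n" if "i < n" for i using that permutes_in_image by fastforce
  have "degree (\<Prod>i = 0..<n. A $$ (i, p i)) \<le> (\<Sum>i = 0..<n. degree (A $$ (i, p i)))"
    using degree_prod_sum_le[of "{0..<n}" "\<lambda>i. A $$ (i, p i)"] by (simp add: o_def)
  also have "\<dots> \<le> (\<Sum>i<n. r i)"
    unfolding atLeast0LessThan by (rule sum_mono) (use deg p in auto)
  finally show "degree (signof p * (\<Prod>i = 0..<n. A $$ (i, p i))) \<le> (\<Sum>i<n. r i)"
    by (cases "sign p = 1") (auto simp: sign_def)
qed (simp add: finite_permutations)

lemma degree_resultant_le:
  fixes g h :: "'a::comm_ring_1 poly poly"
  assumes "\<And>i. degree (coeff g i) \<le> a" and "\<And>i. degree (coeff h i) \<le> b"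
  shows "degree (resultant g h) \<le> degree h * a + degree g * b"
proof -
  let ?r = "\<lambda>i. if i < degree h then a else b"
  have "degree (resultant g h) \<le> (\<Sum>i<degree g + degree h. ?r i)"
    unfolding resultant_def
    by (rule degree_det_le_rowwise[OF sylvester_carrier_mat]) (use assms in \<open>auto simp: sylvester_index_mat\<close>)
  also have "\<dots> = (\<Sum>i=0..<degree h. ?r i) + (\<Sum>i=degree h..<degree g + degree h. ?r i)"
    unfolding atLeast0LessThan[symmetric] by (rule sum.atLeastLessThan_concat[symmetric]) auto
  also have "\<dots> = (\<Sum>i=0..<degree h. a) + (\<Sum>i=degree h..<degree g + degree h. b)"
    by (intro arg_cong2[where f = "(+)"] sum.cong) auto
  also have "\<dots> = degree h * a + degree g * b" by simp
  finally show ?thesis .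
qed

lemma fls_vanishes_below_signof: "fls_vanishes_below (signof p :: 'a::comm_ring_1 fls) 0"
  by (cases "sign p = 1")
    (auto simp: sign_def fls_vanishes_below_1 intro: fls_vanishes_below_uminus)

lemma fls_vanishes_below_det_column:
  fixes B :: "'a::comm_ring_1 fls mat"
  assumes B: "B \<in> carrier_mat n n" and k: "k < n"
    and other: "\<And>i j. i < n \<Longrightarrow> j < n \<Longrightarrow> j \<noteq> k \<Longrightarrow> fls_vanishes_below (B $$ (i, j)) 0"
    and col: "\<And>i. i < n \<Longrightarrow> fls_vanishes_below (B $$ (i, k)) L"
  shows "fls_vanishes_below (det B) L"
  unfolding det_def'[OF B]
proof (intro fls_vanishes_below_sum)
  fix p assume "p \<in> {p. p permutes {0..<n}}"
  then have p: "p permutes {0..<n}" by simp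
  define c where "c i = (if p i = k then L else 0)" for i
  have "fls_vanishes_below (\<Prod>i = 0..<n. B $$ (i, p i)) (\<Sum>i = 0..<n. c i)"
    using p other col permutes_in_image[OF p] by (intro fls_vanishes_below_prod) (auto simp: c_def)
  moreover have "(\<Sum>i = 0..<n. c i) = L"
  proof -
    have "p i = k \<longleftrightarrow> i = Hilbert_Choice.inv p k" for i
      using permutes_inverses[OF p] by metis
    moreover have "Hilbert_Choice.inv p k \<in> {0..<n}"
      using permutes_in_image[OF permutes_inv[OF p]] k by simp
    ultimately show ?thesis unfolding c_def by simp
  qed
  ultimately show "fls_vanishes_below (signof p * (\<Prod>i = 0..<n. B $$ (i, p i))) L"
    using fls_vanishes_below_mult[OF fls_vanishes_below_signof] by fastforce
qed

lemma sylvester_mat_row_powers: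
  fixes G H :: "'a::comm_ring_1 poly"
  defines "n \<equiv> degree H" and "N \<equiv> degree G + degree H"
  assumes i: "i < N"
  shows "(\<Sum>j<N. sylvester_mat G H $$ (i, j) * x ^ (N - 1 - j)) =
    (if i < n then x ^ (n - 1 - i) * poly G x else x ^ (N - 1 - i) * poly H x)"
proof -
  have shift: "(\<Sum>j<N. coeff (monom 1 (Suc r) * Q) (N - j) * x ^ (N - 1 - j)) = x ^ r * poly Q x"
    if "degree Q + r < N" for Q :: "'a poly" and r
  proof -
    have "degree (monom 1 r * Q) < N"
      using that degree_mult_le[of "monom 1 r" Q] degree_monom_le[of "1::'a" r] by linarith
    then have "poly (monom 1 r * Q) x = (\<Sum>t<N. coeff (monom 1 r * Q) t * x ^ t)"
      unfolding poly_altdef by (intro sum.mono_neutral_left) (auto simp: coeff_eq_0)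
    also have "\<dots> = (\<Sum>j<N. coeff (monom 1 r * Q) (N - Suc j) * x ^ (N - Suc j))"
      by (rule sum.nat_diff_reindex[symmetric])
    also have "\<dots> = (\<Sum>j<N. coeff (monom 1 (Suc r) * Q) (N - j) * x ^ (N - 1 - j))"
      by (rule sum.cong) (auto simp: coeff_monom_mult)
    finally show ?thesis by (simp add: poly_monom)
  qed
  have "(\<Sum>j<N. sylvester_mat G H $$ (i, j) * x ^ (N - 1 - j)) =
        (\<Sum>j<N. (if i < n then coeff (monom 1 (n - i) * G) (N - j)
           else coeff (monom 1 (N - i) * H) (N - j)) * x ^ (N - 1 - j))"
    by (rule sum.cong) (use i in \<open>auto simp: sylvester_index_mat2 n_def N_def\<close>)
  also have "\<dots> = (if i < n then x ^ (n - 1 - i) * poly G x else x ^ (N - 1 - i) * poly H x)"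
  proof (cases "i < n")
    case True
    then have "n - i = Suc (n - 1 - i)" "degree G + (n - 1 - i) < N" unfolding N_def n_def by simp_all
    then show ?thesis using True shift[of G "n - 1 - i"] by simp
  next
    case False
    then have "N - i = Suc (N - 1 - i)" "degree H + (N - 1 - i) < N"
      using i unfolding N_def n_def by simp_all
    then show ?thesis using False shift[of H "N - 1 - i"] by simp
  qed
  finally show ?thesis .
qed

lemma fls_vanishes_below_power_mult_resultant:
  fixes G H :: "'a::comm_ring_1 fls poly"
  defines "m \<equiv> degree G" and "n \<equiv> degree H"
  assumes root: "poly G x = 0"
    and cG: "\<And>i. fls_vanishes_below (coeff G i) 0" and cH: "\<And>i. fls_vanishes_below (coeff H i) 0"
    and x: "fls_vanishes_below x \<sigma>" "\<sigma> \<le> 0"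
    and Hx: "fls_vanishes_below (poly H x) v"
    and j: "j < m + n"
  shows "fls_vanishes_below (x ^ j * resultant G H) (v + int (m - 1) * \<sigma>)"
proof -
  define N where "N = m + n"
  define k where "k = N - 1 - j"
  define A where "A = sylvester_mat G H"
  define powers where "powers = vec N (\<lambda>j. x ^ (N - 1 - j))"
  define B where "B = replace_col A (A *\<^sub>v powers) k"
  have A: "A \<in> carrier_mat N N" unfolding A_def N_def m_def n_def by (rule sylvester_carrier_mat)
  have k: "k < N" and j_eq: "N - 1 - k = j" using j unfolding k_def N_def by auto
  have B_col: "B $$ (i, k) =
      (if i < n then x ^ (n - 1 - i) * poly G x else x ^ (N - 1 - i) * poly H x)" if i: "i < N" for i
  proof -
    have "B $$ (i, k) = (\<Sum>j<N. A $$ (i, j) * x ^ (N - 1 - j))"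
      using A i k by (simp add: B_def replace_col_def scalar_prod_def powers_def atLeast0LessThan)
    also have "\<dots> = (if i < n then x ^ (n - 1 - i) * poly G x else x ^ (N - 1 - i) * poly H x)"
      unfolding A_def N_def m_def n_def
      by (rule sylvester_mat_row_powers) (use i in \<open>simp add: N_def m_def n_def\<close>)
    finally show ?thesis .
  qed
  have "det B = x ^ j * resultant G H"
    using cramer_lemma_mat[OF A _ k] k j_eq unfolding B_def resultant_def A_def powers_def by simp
  moreover have "fls_vanishes_below (det B) (v + int (m - 1) * \<sigma>)"
  proof (rule fls_vanishes_below_det_column)
    show "B \<in> carrier_mat N N" using A by (simp add: B_def replace_col_def)
    show "k < N" by (rule k)
  next
    fix i j assume "i < N" "j < N" "j \<noteq> k"
    then show "fls_vanishes_below (B $$ (i, j)) 0"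
      using A cG cH unfolding B_def A_def N_def m_def n_def
      by (auto simp: replace_col_def sylvester_index_mat)
  next
    fix i assume i: "i < N"
    show "fls_vanishes_below (B $$ (i, k)) (v + int (m - 1) * \<sigma>)"
    proof (cases "i < n")
      case False
      have "fls_vanishes_below (x ^ (N - 1 - i) * poly H x) (int (N - 1 - i) * \<sigma> + v)"
        by (rule fls_vanishes_below_mult[OF fls_vanishes_below_power[OF x(1)] Hx])
      moreover have "v + int (m - 1) * \<sigma> \<le> int (N - 1 - i) * \<sigma> + v"
        using mult_right_mono_neg[of "int (N - 1 - i)" "int (m - 1)" \<sigma>] False i x(2)
        by (auto simp: N_def)
      ultimately have "fls_vanishes_below (x ^ (N - 1 - i) * poly H x) (v + int (m - 1) * \<sigma>)"
        by (rule fls_vanishes_below_mono)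
      then show ?thesis using B_col[OF i] False by simp
    qed (simp add: B_col[OF i] root)
  qed
  ultimately show ?thesis by simp
qed

lemma fls_subdegree_resultant_ge:
  fixes G H :: "'a::field fls poly"
  assumes G: "G \<noteq> 0" and root: "poly G x = 0"
    and cG: "\<And>i. fls_vanishes_below (coeff G i) 0" and cH: "\<And>i. fls_vanishes_below (coeff H i) 0"
    and R: "resultant G H \<noteq> 0" and Hx: "poly H x \<noteq> 0"
  shows "fls_subdegree (poly H x) \<le> fls_subdegree (resultant G H)"
proof -
  define v where "v = fls_subdegree (poly H x)"
  have vanish: "fls_vanishes_below (x ^ j * resultant G H) (v + int (degree G - 1) * \<sigma>)"
    if "fls_vanishes_below x \<sigma>" "\<sigma> \<le> 0" "j < degree G + degree H" for j \<sigma>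
    using fls_vanishes_below_power_mult_resultant[OF root cG cH that(1,2) _ that(3)]
      fls_vanishes_below_subdegree unfolding v_def by blast
  have "degree G \<noteq> 0"
  proof
    assume "degree G = 0"
    then obtain c where "G = [:c:]" by (rule degree_eq_zeroE)
    with G root show False by simp
  qed
  show ?thesis
  proof (cases "x \<noteq> 0 \<and> fls_subdegree x < 0")
    case False
    then have "fls_vanishes_below x 0"
      using fls_vanishes_below_iff_subdegree[of x 0] by (cases "x = 0") auto
    from vanish[OF this order.refl, of 0] \<open>degree G \<noteq> 0\<close> show ?thesis
      unfolding v_def using R by (simp add: fls_vanishes_below_iff_subdegree)
  next
    case True
    define s where "s = fls_subdegree x"
    define N where "N = degree G + degree H"
    have "v + int (degree G - 1) * s \<le> fls_subdegree (x ^ (N - 1) * resultant G H)"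
      using vanish[OF fls_vanishes_below_subdegree, of "N - 1"] True R \<open>degree G \<noteq> 0\<close>
      unfolding s_def N_def by (simp add: fls_vanishes_below_iff_subdegree)
    also have "\<dots> = int (degree G - 1) * s + int (degree H) * s + fls_subdegree (resultant G H)"
      using True R \<open>degree G \<noteq> 0\<close> by (simp add: fls_subdegree_pow s_def N_def algebra_simps of_nat_diff)
    moreover have "int (degree H) * s \<le> 0" using True by (simp add: mult_nonneg_nonpos s_def)
    ultimately show ?thesis unfolding v_def by linarith
  qed
qed

section \<open>Bounds on the valuation of h(X, phi)\<close>

lemma fls_subdegree_poly_at_root_ge:
  fixes g h :: "'k::field poly poly"
  assumes e: "e > 0" and g: "g \<noteq> 0" and td: "total_degree g \<le> d" and dh: "degree h \<le> \<delta>"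
    and root: "poly (map_poly (laurent_of_poly e) g) x = 0"
    and nz: "poly (map_poly (laurent_of_poly e) h) x \<noteq> 0"
  shows "- int (e * d * \<delta>) \<le> fls_subdegree (poly (map_poly (laurent_of_poly e) h) x)"
proof -
  interpret inj_comm_ring_hom "laurent_of_poly e" by (rule inj_comm_ring_hom_laurent_of_poly[OF e])
  have "fls_subdegree (laurent_of_poly e (lead_coeff g)) \<le> int (e * degree (lead_coeff g))"
    using g e by (intro fls_subdegree_laurent_of_poly_le) auto
  also have "\<dots> \<le> int (e * d)"
    by (intro of_nat_mono mult_le_mono2 order.trans[OF _ td] degree_coeff_le_total_degree)
  finally have "fls_vanishes_below x (- int (e * d))"
    using g e root by (intro fls_vanishes_below_root) (auto simp: fls_vanishes_below_laurent_of_poly)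
  then have "fls_vanishes_below (poly (map_poly (laurent_of_poly e) h) x) (- (int \<delta> * int (e * d)))"
    using e dh by (intro fls_vanishes_below_poly) (auto simp: fls_vanishes_below_laurent_of_poly)
  with nz show ?thesis by (simp add: fls_vanishes_below_iff_subdegree algebra_simps)
qed

lemma fls_subdegree_poly_at_root_le:
  fixes g h :: "'k::field poly poly"
  assumes e: "e > 0" and irr: "irreducible g" and td: "total_degree g \<le> d"
    and dh: "degree h \<le> \<delta>" and ch: "\<And>i. degree (coeff h i) \<le> \<delta>"
    and root: "poly (map_poly (laurent_of_poly e) g) x = 0"
    and nz: "poly (map_poly (laurent_of_poly e) h) x \<noteq> 0"
  shows "fls_subdegree (poly (map_poly (laurent_of_poly e) h) x) \<le> int (e * (2 * d * \<delta>))"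
proof -
  interpret L: inj_comm_ring_hom "laurent_of_poly e" by (rule inj_comm_ring_hom_laurent_of_poly[OF e])
  interpret P: map_poly_comm_ring_hom "laurent_of_poly e" ..
  have "\<not> g dvd h"
  proof
    assume "g dvd h"
    then obtain q where "h = g * q" ..
    with root nz show False by (simp add: P.hom_mult)
  qed
  with irr have R: "resultant g h \<noteq> 0" by (rule resultant_nonzero_if_irreducible_not_dvd)
  have "degree (resultant g h) \<le> degree h * d + degree g * \<delta>"
    using degree_coeff_le_total_degree[of g] td ch by (intro degree_resultant_le) (auto intro: order.trans)
  also have "\<dots> \<le> \<delta> * d + d * \<delta>"
    using dh degree_le_total_degree[of g] td by (intro add_mono mult_right_mono) auto
  also have "\<dots> = 2 * d * \<delta>" by simp
  finally have "degree (resultant g h) \<le> 2 * d * \<delta>" .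
  then have "int (e * degree (resultant g h)) \<le> int (e * (2 * d * \<delta>))"
    by (intro of_nat_mono mult_le_mono2)
  then have "fls_subdegree (laurent_of_poly e (resultant g h)) \<le> int (e * (2 * d * \<delta>))"
    using fls_subdegree_laurent_of_poly_le[OF e R] by linarith
  moreover have "fls_subdegree (poly (map_poly (laurent_of_poly e) h) x) \<le>
      fls_subdegree (laurent_of_poly e (resultant g h))"
    using irr e R root nz unfolding L.resultant_hom[symmetric]
    by (intro fls_subdegree_resultant_ge) (auto simp: fls_vanishes_below_laurent_of_poly L.resultant_hom)
  ultimately show ?thesis by linarith
qed

theorem mainTheorem6:
  fixes g h :: "'k::field_char_0 poly poly"
    and phi :: "rat \<Rightarrow> 'k alg_closure"
    and d \<delta> :: nat
  assumes "irreducible g"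
    and "total_degree g = d"
    and "pderiv g \<noteq> 0"
    and "puiseux phi"
    and "ps_eval g phi = (\<lambda>_. 0)"
    and "degree h \<le> \<delta>"
    and "\<forall>i. degree (coeff h i) \<le> \<delta>"
    and "ps_eval h phi \<noteq> (\<lambda>_. 0)"
  shows "\<bar>ps_val (ps_eval h phi)\<bar> \<le> 2 * of_nat d * of_nat \<delta>"
proof -
  obtain e N where e: "e > 0" and phi: "ps_lattice e N phi"
    using \<open>puiseux phi\<close> unfolding puiseux_def ps_lattice_def by blast
  define x where "x = fls_of_ps e phi"
  define v where "v = fls_subdegree (poly (map_poly (laurent_of_poly e) h) x)"
  obtain M where M: "ps_lattice e M (ps_eval h phi)"
    and eval_h: "fls_of_ps e (ps_eval h phi) = poly (map_poly (laurent_of_poly e) h) x"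
    using fls_of_ps_ps_eval[OF e phi] unfolding x_def by blast
  have root: "poly (map_poly (laurent_of_poly e) g) x = 0"
    using fls_of_ps_ps_eval[OF e phi, of g] \<open>ps_eval g phi = (\<lambda>_. 0)\<close>
    unfolding x_def by (auto simp: fls_of_ps_zero[OF e])
  have nz: "poly (map_poly (laurent_of_poly e) h) x \<noteq> 0"
    using fls_of_ps_eq_0_iff[OF e M] eval_h \<open>ps_eval h phi \<noteq> (\<lambda>_. 0)\<close> by simp
  have lower: "- int (e * d * \<delta>) \<le> v"
    using fls_subdegree_poly_at_root_ge[OF e _ _ _ root nz] assms unfolding v_def
    by (auto simp: irreducible_def)
  have upper: "v \<le> int (e * (2 * d * \<delta>))"
    using fls_subdegree_poly_at_root_le[OF e _ _ _ _ root nz] assms unfolding v_def by auto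
  have "int (e * d * \<delta>) \<le> int (e * (2 * d * \<delta>))" by simp
  with lower upper have "of_int \<bar>v\<bar> \<le> (of_int (int (e * (2 * d * \<delta>))) :: rat)"
    unfolding of_int_le_iff abs_le_iff by linarith
  moreover have "ps_val (ps_eval h phi) = of_int v / of_nat e"
    using ps_val_eq_fls_subdegree[OF e M \<open>ps_eval h phi \<noteq> (\<lambda>_. 0)\<close>] eval_h unfolding v_def by simp
  ultimately show ?thesis
    using e by (simp add: divide_le_eq algebra_simps)
qed

end
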